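(* Let $W:\mathcal X\to\mathcal Y$ be a DMC with a fixed input distribution, let $r>0$, and let $\alpha,\beta\in\mathcal Y_{\mathrm{small}}$ be distinct output letters such that $\boldsymbol\beta\in\mathcal C(\boldsymbol\alpha,r)$. Then the channel $Q$ obtained by merging $\alpha$ and $\beta$ satisfies $I(W)-I(Q)\le \frac{4|\mathcal X|r}{|\mathcal Y|}$.
   Context: $\mathcal X,\mathcal Y$ finite disjoint sets, $|\mathcal X|\ge2$; $W$ a DMC with transition probabilities $W(y|x)$; input distribution $\pi(x)>0$ fixed, output probabilities $\pi(y)=\sum_x\pi(x)W(y|x)>0$; $I(\cdot)$ is input–output mutual information (natural log). Merging $\alpha,\beta$ gives $Q$ with output alphabet $(\mathcal Y\setminus\{\alpha,\beta\})\cup\{\gamma\}$, $Q(\gamma|x)=W(\alpha|x)+W(\beta|x)$, $Q(y|x)=W(y|x)$ otherwise. $\mathcal Y_{\mathrm{small}}=\{y\in\mathcal Y:\pi(y)\le 2/|\mathcal Y|\}$. For an output letter $\alpha$, $\boldsymbol\alpha=(\alpha_x)_{x\in\mathcal X}$ with $\alpha_x=W(x|\alpha)=\pi(x)W(\alpha|x)/\pi(\alpha)$ is its posterior probability vector. $\mathbb R^{\mathcal X}_K=\{\boldsymbol\zeta\in\mathbb R^{\mathcal X}:\sum_x\zeta_x=1\}$. $x_{\max}=x_{\max}(\boldsymbol\alpha)$ is an index of a largest entry of $\boldsymbol\alpha$ (ties broken arbitrarily but consistently), $\mathcal X'=\mathcal X\setminus\{x_{\max}\}$, $\omega_\downarrow(a,r)=\max(\sqrt{r^2/4+ar}-r/2,\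 r)$, $\omega'(a,r)=\omega_\downarrow(a,r)/(|\mathcal X|-1)$, and $\mathcal C(\boldsymbol\alpha,r)=\{\boldsymbol\zeta\in\mathbb R^{\mathcal X}_K: |\zeta_x-\alpha_x|\le\omega'(\alpha_x,r)\ \forall x\in\mathcal X'\}$. *)

theory Defs
  imports Complex_Main "HOL-Library.Cardinality"
begin

text \<open>A DMC with finite input alphabet (the type 'x) and output alphabet given by a
finite set of letters; W x y is the transition probability W(y|x), p x the input
distribution pi(x).\<close>

definition out_prob :: "('x::finite \<Rightarrow> real) \<Rightarrow> ('x \<Rightarrow> 'y \<Rightarrow> real) \<Rightarrow> 'y \<Rightarrow> real" where
  "out_prob p W y = (\<Sum>x\<in>UNIV. p x * W x y)"

definition mutual_info :: "('x::finite \<Rightarrow> real) \<Rightarrow> ('x \<Rightarrow> 'y \<Rightarrow> real) \<Rightarrow> 'y set \<Rightarrow> real" where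
  "mutual_info p W Y = (\<Sum>x\<in>UNIV. \<Sum>y\<in>Y.
      (if W x y = 0 then 0 else p x * W x y * ln (W x y / out_prob p W y)))"

text \<open>Merging alpha and beta: the new letter gamma is represented by None, the
remaining letters y by Some y.\<close>
definition merge :: "('x \<Rightarrow> 'y \<Rightarrow> real) \<Rightarrow> 'y \<Rightarrow> 'y \<Rightarrow> 'x \<Rightarrow> 'y option \<Rightarrow> real" where
  "merge W a b x z = (case z of None \<Rightarrow> W x a + W x b | Some y \<Rightarrow> W x y)"

definition merged_alphabet :: "'y set \<Rightarrow> 'y \<Rightarrow> 'y \<Rightarrow> 'y option set" where
  "merged_alphabet Y a b = insert None (Some ` (Y - {a, b}))"

definition Y_small :: "('x::finite \<Rightarrow> real) \<Rightarrow> ('x \<Rightarrow> 'y \<Rightarrow> real) \<Rightarrow> 'y set \<Rightarrow> 'y set" where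
  "Y_small p W Y = {y \<in> Y. out_prob p W y \<le> 2 / real (card Y)}"

definition posterior :: "('x::finite \<Rightarrow> real) \<Rightarrow> ('x \<Rightarrow> 'y \<Rightarrow> real) \<Rightarrow> 'y \<Rightarrow> 'x \<Rightarrow> real" where
  "posterior p W y x = p x * W x y / out_prob p W y"

definition omega_down :: "real \<Rightarrow> real \<Rightarrow> real" where
  "omega_down a r = max (sqrt (r\<^sup>2 / 4 + a * r) - r / 2) r"

definition omega' :: "'x::finite itself \<Rightarrow> real \<Rightarrow> real \<Rightarrow> real" where
  "omega' t a r = omega_down a r / (real CARD('x) - 1)"

text \<open>The set C(alpha, r); xm is the chosen index of a largest entry of alpha.\<close>
definition C_set :: "('x::finite \<Rightarrow> real) \<Rightarrow> 'x \<Rightarrow> real \<Rightarrow> ('x \<Rightarrow> real) set" where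
  "C_set \<alpha> xm r = {\<zeta>. (\<Sum>x\<in>UNIV. \<zeta> x) = 1 \<and>
      (\<forall>x\<in>UNIV - {xm}. \<bar>\<zeta> x - \<alpha> x\<bar> \<le> omega' TYPE('x) (\<alpha> x) r)}"

end

theory Submission
  imports Defs
begin

text \<open>For each input x, the information lost by merging is bounded, via ln u \<le> u - 1, by the
chi-square type term A B (a - b)^2 / (A a + B b), where A, B are the output probabilities of
\<alpha>, \<beta> and a, b the posterior probabilities of x given \<alpha>, \<beta>. Membership of the posterior of
\<beta> in C(\<alpha>, r) gives |a - b| \<le> omega_down(a, r) for every x, also for x_max because both
posteriors sum to 1; hence (a - b)^2 \<le> r max(a, b), so each term is at most
(A + B) r \<le> 4 r / |Y|.\<close>

definition mi_summand :: "real \<Rightarrow> real \<Rightarrow> real \<Rightarrow> real" where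
  "mi_summand P w q = (if w = 0 then 0 else P * w * ln (w / q))"

lemma mutual_info_eq_sum_mi_summand:
  "mutual_info p W Y = (\<Sum>x\<in>UNIV. \<Sum>y\<in>Y. mi_summand (p x) (W x y) (out_prob p W y))"
  unfolding mutual_info_def mi_summand_def ..

lemma mi_summand_le:
  fixes P w c q :: real
  assumes "0 \<le> P" "0 \<le> w" "0 < c" "0 < q"
  shows "mi_summand P w c \<le> P * w * ln q + P * w * (w / c / q - 1)"
proof (cases "w = 0")
  case False
  have "ln (w / c) = ln q + ln (w / c / q)"
    using False assms ln_mult[of q "w / c / q"] by simp
  also have "\<dots> \<le> ln q + (w / c / q - 1)"
    using False assms by (simp add: ln_le_minus_one)
  finally have "P * w * ln (w / c) \<le> P * w * (ln q + (w / c / q - 1))"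
    using assms by (simp add: mult_left_mono)
  with False show ?thesis
    unfolding mi_summand_def by (simp add: algebra_simps)
qed (simp add: mi_summand_def)

lemma chi_square_identity:
  fixes A B a b :: real
  assumes "A * a + B * b \<noteq> 0"
  shows "A * a * (a * (A + B) / (A * a + B * b) - 1) + B * b * (b * (A + B) / (A * a + B * b) - 1)
       = A * B * (a - b)\<^sup>2 / (A * a + B * b)"
proof -
  define D where "D = A * a + B * b"
  have "D \<noteq> 0" using assms by (simp add: D_def)
  then have "A * a * (a * (A + B) / D - 1) + B * b * (b * (A + B) / D - 1)
      = (A * a * (a * (A + B) - D) + B * b * (b * (A + B) - D)) / D"
    by (simp add: field_simps)
  also have "A * a * (a * (A + B) - D) + B * b * (b * (A + B) - D) = A * B * (a - b)\<^sup>2"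
    unfolding D_def by (simp add: algebra_simps power2_eq_square)
  finally show ?thesis unfolding D_def .
qed

lemma mi_summand_merge_le:
  fixes P wa wb A B a b :: real
  assumes "0 < P" "0 \<le> wa" "0 \<le> wb" "0 < A" "0 < B"
    and a: "P * wa = A * a" and b: "P * wb = B * b"
  shows "mi_summand P wa A + mi_summand P wb B - mi_summand P (wa + wb) (A + B)
       \<le> A * B * (a - b)\<^sup>2 / (A * a + B * b)"
proof (cases "wa + wb = 0")
  case True
  with assms have "wa = 0" "wb = 0" by auto
  with a b assms have "a = 0" "b = 0" by auto
  with \<open>wa = 0\<close> \<open>wb = 0\<close> show ?thesis by (simp add: mi_summand_def)
next
  case False
  define D where "D = A * a + B * b"
  define q where "q = D / (P * (A + B))"
  have D: "D = P * (wa + wb)" unfolding D_def by (simp add: a b distrib_left)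
  have "0 < wa + wb" using False assms by simp
  with assms have "0 < D" by (simp add: D)
  with assms have "0 < q" by (simp add: q_def)
  have q_eq: "(wa + wb) / (A + B) = q" using assms by (simp add: q_def D)
  have ratio: "w / C / q = c * (A + B) / D" if "P * w = C * c" "0 < C" for w C c
    using that assms \<open>0 < D\<close> by (simp add: q_def field_simps)
  have "mi_summand P wa A + mi_summand P wb B
      \<le> (P * wa * ln q + P * wa * (wa / A / q - 1)) + (P * wb * ln q + P * wb * (wb / B / q - 1))"
    using assms \<open>0 < q\<close> by (intro add_mono mi_summand_le) auto
  moreover have "mi_summand P (wa + wb) (A + B) = P * (wa + wb) * ln q"
    using False q_eq by (simp add: mi_summand_def)
  moreover have "P * wa * (wa / A / q - 1) + P * wb * (wb / B / q - 1)
      = A * a * (a * (A + B) / D - 1) + B * b * (b * (A + B) / D - 1)"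
    by (simp only: ratio[OF a \<open>0 < A\<close>] ratio[OF b \<open>0 < B\<close>] a b)
  ultimately show ?thesis
    using chi_square_identity[of A a B b] \<open>0 < D\<close> by (simp add: D_def algebra_simps)
qed

lemma omega_down_ge: "r \<le> omega_down a r"
  unfolding omega_down_def by simp

lemma omega_down_mono:
  assumes "0 \<le> r" "a \<le> a'"
  shows "omega_down a r \<le> omega_down a' r"
proof -
  have "sqrt (r\<^sup>2 / 4 + a * r) \<le> sqrt (r\<^sup>2 / 4 + a' * r)"
    using assms by (simp add: mult_right_mono)
  then show ?thesis unfolding omega_down_def by linarith
qed

lemma sq_diff_le_of_abs_diff_le_omega_down:
  fixes a b r :: real
  assumes "0 \<le> a" "0 \<le> b" "0 \<le> r" and close: "\<bar>a - b\<bar> \<le> omega_down a r"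
  shows "(a - b)\<^sup>2 \<le> r * max a b"
proof (cases "\<bar>a - b\<bar> \<le> r")
  case True
  have "(a - b)\<^sup>2 = \<bar>a - b\<bar> * \<bar>a - b\<bar>" by (simp add: power2_eq_square)
  also have "\<dots> \<le> r * max a b"
    using True assms by (intro mult_mono) (auto simp: abs_le_iff)
  finally show ?thesis .
next
  case False
  define d where "d = sqrt (r\<^sup>2 / 4 + a * r) - r / 2"
  have "\<bar>a - b\<bar> \<le> d" using False close unfolding omega_down_def d_def by linarith
  have "(sqrt (r\<^sup>2 / 4 + a * r))\<^sup>2 = r\<^sup>2 / 4 + a * r" using assms by simp
  then have "d\<^sup>2 + r * d = a * r" unfolding d_def by (simp add: power2_eq_square algebra_simps)
  moreover have "0 \<le> r * d" using \<open>\<bar>a - b\<bar> \<le> d\<close> assms by simp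
  ultimately have "d\<^sup>2 \<le> r * a" by (simp add: mult.commute)
  have "(a - b)\<^sup>2 \<le> d\<^sup>2"
    using \<open>\<bar>a - b\<bar> \<le> d\<close> by (metis abs_ge_zero power2_abs power_mono)
  also note \<open>d\<^sup>2 \<le> r * a\<close>
  also have "r * a \<le> r * max a b" using assms by (simp add: mult_left_mono)
  finally show ?thesis .
qed

lemma chi_square_le:
  fixes A B a b r :: real
  assumes "0 < A" "0 < B" "0 \<le> a" "0 \<le> b" "0 \<le> r" and sq: "(a - b)\<^sup>2 \<le> r * max a b"
  shows "A * B * (a - b)\<^sup>2 / (A * a + B * b) \<le> (A + B) * r"
proof -
  have "A * B * (a - b)\<^sup>2 \<le> A * B * (r * max a b)"
    using sq assms by (simp add: mult_left_mono)
  also have "\<dots> \<le> (A + B) * r * (A * a + B * b)"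
  proof -
    have "A * B * (r * a) \<le> (A + B) * r * (A * a)" "A * B * (r * b) \<le> (A + B) * r * (B * b)"
      using assms by (simp_all add: mult_right_mono algebra_simps)
    moreover have "0 \<le> (A + B) * r * (A * a)" "0 \<le> (A + B) * r * (B * b)"
      using assms by simp_all
    ultimately show ?thesis by (auto simp: max_def distrib_left)
  qed
  finally have "A * B * (a - b)\<^sup>2 \<le> (A + B) * r * (A * a + B * b)" .
  moreover have "0 \<le> A * a + B * b" "0 \<le> (A + B) * r" using assms by simp_all
  ultimately show ?thesis
    by (cases "A * a + B * b = 0") (simp_all add: pos_divide_le_eq)
qed

lemma abs_diff_le_omega_down_if_in_C_set:
  fixes \<alpha> \<zeta> :: "'x::finite \<Rightarrow> real"
  assumes card: "CARD('x) \<ge> 2" and "0 \<le> r"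
    and \<alpha>_nonneg: "\<And>x. 0 \<le> \<alpha> x" and \<alpha>_sum: "(\<Sum>x\<in>UNIV. \<alpha> x) = 1"
    and xm_max: "\<And>x. \<alpha> x \<le> \<alpha> xm" and \<zeta>: "\<zeta> \<in> C_set \<alpha> xm r"
  shows "\<bar>\<alpha> x - \<zeta> x\<bar> \<le> omega_down (\<alpha> x) r"
proof -
  define n where "n = real CARD('x) - 1"
  have "1 \<le> n" using card unfolding n_def by simp
  have close: "\<bar>\<zeta> y - \<alpha> y\<bar> \<le> omega_down (\<alpha> y) r / n" if "y \<noteq> xm" for y
    using \<zeta> that unfolding C_set_def omega'_def n_def by auto
  show ?thesis
  proof (cases "x = xm")
    case False
    have "0 \<le> omega_down (\<alpha> x) r" using omega_down_ge \<open>0 \<le> r\<close> order_trans by blast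
    with \<open>1 \<le> n\<close> have "omega_down (\<alpha> x) r / n \<le> omega_down (\<alpha> x) r"
      by (simp add: divide_le_eq mult_le_cancel_left1)
    with close[OF False] show ?thesis by (simp add: abs_minus_commute)
  next
    case True
    have "(\<Sum>y\<in>UNIV. \<zeta> y - \<alpha> y) = 0"
      using \<zeta> \<alpha>_sum unfolding C_set_def by (simp add: sum_subtractf)
    then have "\<alpha> xm - \<zeta> xm = (\<Sum>y\<in>UNIV - {xm}. \<zeta> y - \<alpha> y)"
      by (simp add: sum.remove[of UNIV xm])
    also have "\<bar>\<dots>\<bar> \<le> (\<Sum>y\<in>UNIV - {xm}. \<bar>\<zeta> y - \<alpha> y\<bar>)"
      by (rule sum_abs)
    also have "\<dots> \<le> (\<Sum>y\<in>UNIV - {xm}. omega_down (\<alpha> xm) r / n)"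
    proof (rule sum_mono)
      fix y assume "y \<in> UNIV - {xm}"
      then have "\<bar>\<zeta> y - \<alpha> y\<bar> \<le> omega_down (\<alpha> y) r / n" using close by blast
      also have "\<dots> \<le> omega_down (\<alpha> xm) r / n"
        using \<open>1 \<le> n\<close> \<open>0 \<le> r\<close> xm_max by (simp add: divide_right_mono omega_down_mono)
      finally show "\<bar>\<zeta> y - \<alpha> y\<bar> \<le> omega_down (\<alpha> xm) r / n" .
    qed
    also have "\<dots> = omega_down (\<alpha> xm) r"
      using \<open>1 \<le> n\<close> card by (simp add: card_Diff_subset n_def of_nat_diff)
    finally show ?thesis using True by simp
  qed
qed

lemma out_prob_merge_Some: "out_prob p (merge W \<alpha> \<beta>) (Some y) = out_prob p W y"
  unfolding out_prob_def merge_def by simp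

lemma out_prob_merge_None: "out_prob p (merge W \<alpha> \<beta>) None = out_prob p W \<alpha> + out_prob p W \<beta>"
  unfolding out_prob_def merge_def by (simp add: sum.distrib distrib_left)

lemma mutual_info_sub_mutual_info_merge:
  fixes W :: "'x::finite \<Rightarrow> 'y \<Rightarrow> real"
  assumes "finite Y" "\<alpha> \<in> Y" "\<beta> \<in> Y" "\<alpha> \<noteq> \<beta>"
  shows "mutual_info p W Y - mutual_info p (merge W \<alpha> \<beta>) (merged_alphabet Y \<alpha> \<beta>)
    = (\<Sum>x\<in>UNIV. mi_summand (p x) (W x \<alpha>) (out_prob p W \<alpha>)
        + mi_summand (p x) (W x \<beta>) (out_prob p W \<beta>)
        - mi_summand (p x) (W x \<alpha> + W x \<beta>) (out_prob p W \<alpha> + out_prob p W \<beta>))"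
proof -
  define R where "R = Y - {\<alpha>, \<beta>}"
  define f where "f x y = mi_summand (p x) (W x y) (out_prob p W y)" for x y
  have Y: "Y = insert \<alpha> (insert \<beta> R)" and R: "finite R" "\<alpha> \<notin> R" "\<beta> \<notin> R"
    using assms unfolding R_def by auto
  have "(\<Sum>y\<in>Y. f x y) = f x \<alpha> + f x \<beta> + (\<Sum>y\<in>R. f x y)" for x
    using R assms(4) by (simp add: Y add.assoc)
  moreover have "(\<Sum>z\<in>merged_alphabet Y \<alpha> \<beta>.
        mi_summand (p x) (merge W \<alpha> \<beta> x z) (out_prob p (merge W \<alpha> \<beta>) z))
      = mi_summand (p x) (W x \<alpha> + W x \<beta>) (out_prob p W \<alpha> + out_prob p W \<beta>) + (\<Sum>y\<in>R. f x y)"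
    for x
    using R by (simp add: merged_alphabet_def R_def[symmetric] sum.reindex out_prob_merge_None
        out_prob_merge_Some f_def) (simp add: merge_def)
  ultimately show ?thesis
    unfolding mutual_info_eq_sum_mi_summand f_def by (simp add: sum_subtractf[symmetric])
qed

lemma sum_posterior:
  assumes "out_prob p W y \<noteq> 0"
  shows "(\<Sum>x\<in>UNIV. posterior p W y x) = 1"
  using assms unfolding posterior_def out_prob_def by (simp flip: sum_divide_distrib)

lemma out_prob_mult_posterior:
  assumes "out_prob p W y \<noteq> 0"
  shows "out_prob p W y * posterior p W y x = p x * W x y"
  using assms unfolding posterior_def by simp

lemma posterior_nonneg:
  "0 \<le> p x \<Longrightarrow> 0 \<le> W x y \<Longrightarrow> 0 \<le> out_prob p W y \<Longrightarrow> 0 \<le> posterior p W y x"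
  unfolding posterior_def by simp

lemma merge_loss_at_input_le:
  assumes "0 < p x" "0 \<le> W x \<alpha>" "0 \<le> W x \<beta>" "0 < out_prob p W \<alpha>" "0 < out_prob p W \<beta>" "0 \<le> r"
    and "\<bar>posterior p W \<alpha> x - posterior p W \<beta> x\<bar> \<le> omega_down (posterior p W \<alpha> x) r"
  shows "mi_summand (p x) (W x \<alpha>) (out_prob p W \<alpha>) + mi_summand (p x) (W x \<beta>) (out_prob p W \<beta>)
      - mi_summand (p x) (W x \<alpha> + W x \<beta>) (out_prob p W \<alpha> + out_prob p W \<beta>)
    \<le> (out_prob p W \<alpha> + out_prob p W \<beta>) * r"
proof -
  define A B where "A = out_prob p W \<alpha>" and "B = out_prob p W \<beta>"
  define a b where "a = posterior p W \<alpha> x" and "b = posterior p W \<beta> x"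
  have "p x * W x \<alpha> = A * a" "p x * W x \<beta> = B * b"
    using out_prob_mult_posterior[of p W \<alpha> x] out_prob_mult_posterior[of p W \<beta> x] assms
    by (simp_all add: A_def B_def a_def b_def)
  then have "mi_summand (p x) (W x \<alpha>) A + mi_summand (p x) (W x \<beta>) B
      - mi_summand (p x) (W x \<alpha> + W x \<beta>) (A + B) \<le> A * B * (a - b)\<^sup>2 / (A * a + B * b)"
    using assms by (intro mi_summand_merge_le) (auto simp: A_def B_def)
  also have "\<dots> \<le> (A + B) * r"
    using assms by (intro chi_square_le sq_diff_le_of_abs_diff_le_omega_down)
      (auto simp: A_def B_def a_def b_def posterior_nonneg)
  finally show ?thesis unfolding A_def B_def .
qed

theorem corollary4:
  fixes W :: "'x::finite \<Rightarrow> 'y::finite \<Rightarrow> real"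
    and p :: "'x \<Rightarrow> real"
    and r :: real and \<alpha> \<beta> :: 'y and xm :: 'x
  assumes card_X: "CARD('x) \<ge> 2"
    and W_nonneg: "\<And>x y. W x y \<ge> 0"
    and W_sum: "\<And>x. (\<Sum>y\<in>UNIV. W x y) = 1"
    and p_pos: "\<And>x. p x > 0"
    and p_sum: "(\<Sum>x\<in>UNIV. p x) = 1"
    and out_pos: "\<And>y. out_prob p W y > 0"
    and r_pos: "r > 0"
    and \<alpha>_small: "\<alpha> \<in> Y_small p W UNIV"
    and \<beta>_small: "\<beta> \<in> Y_small p W UNIV"
    and distinct: "\<alpha> \<noteq> \<beta>"
    and xm_max: "\<And>x. posterior p W \<alpha> x \<le> posterior p W \<alpha> xm"
    and \<beta>_in_C: "posterior p W \<beta> \<in> C_set (posterior p W \<alpha>) xm r"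
  shows "mutual_info p W UNIV - mutual_info p (merge W \<alpha> \<beta>) (merged_alphabet UNIV \<alpha> \<beta>)
           \<le> 4 * real CARD('x) * r / real CARD('y)"
proof -
  define A B where "A = out_prob p W \<alpha>" and "B = out_prob p W \<beta>"
  have nonneg: "0 \<le> posterior p W y x" for y x
    using p_pos W_nonneg out_pos by (simp add: posterior_nonneg less_imp_le)
  have "(\<Sum>x\<in>UNIV. posterior p W \<alpha> x) = 1"
    using out_pos[of \<alpha>] by (intro sum_posterior) simp
  then have "\<bar>posterior p W \<alpha> x - posterior p W \<beta> x\<bar> \<le> omega_down (posterior p W \<alpha> x) r" for x
    using card_X r_pos nonneg xm_max \<beta>_in_C
    by (intro abs_diff_le_omega_down_if_in_C_set) auto
  then have loss_le: "mi_summand (p x) (W x \<alpha>) A + mi_summand (p x) (W x \<beta>) B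
      - mi_summand (p x) (W x \<alpha> + W x \<beta>) (A + B) \<le> (A + B) * r" for x
    unfolding A_def B_def using p_pos W_nonneg out_pos r_pos
    by (intro merge_loss_at_input_le) (auto simp: less_imp_le)
  have "mutual_info p W UNIV - mutual_info p (merge W \<alpha> \<beta>) (merged_alphabet UNIV \<alpha> \<beta>)
      = (\<Sum>x\<in>UNIV. mi_summand (p x) (W x \<alpha>) A + mi_summand (p x) (W x \<beta>) B
          - mi_summand (p x) (W x \<alpha> + W x \<beta>) (A + B))"
    unfolding A_def B_def using distinct by (intro mutual_info_sub_mutual_info_merge) auto
  also have "\<dots> \<le> (\<Sum>x\<in>(UNIV :: 'x set). (A + B) * r)"
    by (rule sum_mono) (rule loss_le)
  also have "\<dots> = real CARD('x) * ((A + B) * r)"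
    by simp
  also have "\<dots> \<le> real CARD('x) * (4 / real CARD('y) * r)"
    using \<alpha>_small \<beta>_small r_pos unfolding Y_small_def A_def B_def
    by (intro mult_left_mono mult_right_mono) auto
  also have "\<dots> = 4 * real CARD('x) * r / real CARD('y)"
    by simp
  finally show ?thesis .
qed

end
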